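(* Fix $k\ge2$, $c>0$ and $\zeta_n\in(0,1]$ with $\limsup_{n\to\infty}\zeta_n(k-1)c^{k-1}<e$. For any sequence $G_n=(V_n,E_n)$ of asymptotically tree-like $k$-uniform hypergraphs, for all sufficiently large $n$ there is a unique $\mathbf x^\ast\in[0,c]^{V_n}$ with $F^{G_n}_{c,\zeta_n}(\mathbf x^\ast)=\mathbf x^\ast$.
   Context: Hypergraphs are simple. For a hypergraph $G$ and $S\subseteq V(G)$, $d_G(S)=|\{e\in E(G):S\subseteq e\}|$, $\Delta_\ell(G)=\max_{|S|=\ell}d_G(S)$, $\Delta(G)=\Delta_1(G)$ the maximum degree, and $\Gamma(G)$ is the maximum over distinct $v,v'$ of the number of $(k-1)$-sets $S$ with $S\cup\{v\},S\cup\{v'\}\in E(G)$. A sequence $(G_n)$ of $k$-uniform hypergraphs is asymptotically tree-like if, with $G=G_n$, $\Delta=\Delta(G)$, as $n\to\infty$: (1) $\Delta\to\infty$; (2) $\Delta_\ell(G)=o(\Delta^{\frac{k-\ell}{k-1}})$ for each $\ell\in\{2,\dots,k-1\}$; (3) $\Gamma(G)=o(\Delta)$; (4) $|E(G)|/|V(G)|=\Omega(\Delta)$. For a $k$-uniform hypergraph $G=(V,E)$ with maximum degree $\Delta$, the map $F^G_{c,\zeta}:[0,c]^V\to[0,c]^V$ is $(F^G_{c,\zeta}(\mathbf x))_v=c\exp\left(-\frac{\zeta}{\Delta}\sum_{e\ni v}\prod_{u\in e\setminus\{v\}}x_u\right)$. *)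

theory Defs
  imports "HOL-Analysis.Analysis" "HOL-Library.Landau_Symbols"
begin

definition uniform_hypergraph :: "nat \<Rightarrow> 'a set \<Rightarrow> 'a set set \<Rightarrow> bool" where
  "uniform_hypergraph k V E \<longleftrightarrow> finite V \<and> (\<forall>e\<in>E. e \<subseteq> V \<and> card e = k)"

definition hdeg :: "'a set set \<Rightarrow> 'a set \<Rightarrow> nat" where
  "hdeg E S = card {e\<in>E. S \<subseteq> e}"

definition Delta_l :: "'a set \<Rightarrow> 'a set set \<Rightarrow> nat \<Rightarrow> nat" where
  "Delta_l V E l = Max (insert 0 {hdeg E S | S. S \<subseteq> V \<and> card S = l})"

definition max_degree :: "'a set \<Rightarrow> 'a set set \<Rightarrow> nat" where
  "max_degree V E = Delta_l V E 1"

definition Gamma_codeg :: "nat \<Rightarrow> 'a set \<Rightarrow> 'a set set \<Rightarrow> nat" where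
  "Gamma_codeg k V E = Max (insert 0
     {card {S. card S = k - 1 \<and> S \<union> {v} \<in> E \<and> S \<union> {v'} \<in> E} | v v'.
        v \<in> V \<and> v' \<in> V \<and> v \<noteq> v'})"

definition asymp_tree_like :: "nat \<Rightarrow> (nat \<Rightarrow> 'a set) \<Rightarrow> (nat \<Rightarrow> 'a set set) \<Rightarrow> bool" where
  "asymp_tree_like k V E \<longleftrightarrow>
     (\<forall>n. uniform_hypergraph k (V n) (E n)) \<and>
     filterlim (\<lambda>n. real (max_degree (V n) (E n))) at_top sequentially \<and>
     (\<forall>l\<in>{2..k-1}. (\<lambda>n. real (Delta_l (V n) (E n) l)) \<in>
        o[sequentially](\<lambda>n. real (max_degree (V n) (E n)) powr ((real k - real l) / (real k - 1)))) \<and>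
     (\<lambda>n. real (Gamma_codeg k (V n) (E n))) \<in> o[sequentially](\<lambda>n. real (max_degree (V n) (E n))) \<and>
     (\<lambda>n. real (card (E n)) / real (card (V n))) \<in> \<Omega>[sequentially](\<lambda>n. real (max_degree (V n) (E n)))"

text \<open>The map F^G_{c,zeta}, restricted to V (elements of [0,c]^V are represented
  as extensional functions on V).\<close>
definition Fmap :: "'a set \<Rightarrow> 'a set set \<Rightarrow> real \<Rightarrow> real \<Rightarrow> ('a \<Rightarrow> real) \<Rightarrow> ('a \<Rightarrow> real)" where
  "Fmap V E c \<zeta> x = restrict (\<lambda>v. c * exp (- (\<zeta> / real (max_degree V E)) *
       (\<Sum>e\<in>{e\<in>E. v \<in> e}. \<Prod>u\<in>e - {v}. x u))) V"

end

theory Submission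
  imports Defs "HOL-Real_Asymp.Real_Asymp"
begin

text \<open>
  The map F is antitone on the box [0,c]^V, so F \<circ> F is monotone and has a least fixed
  point p; since p and F p form a 2-cycle of F and every fixed point of F lies above p,
  uniqueness reduces to excluding nontrivial 2-cycles. If F x = y and F y = x, let R be the
  maximum of ln (y/x) over V, attained at v. Writing the products of x and y over an edge
  through v in terms of each other, each of the at most \<Delta> such edges contributes at most
  (\<zeta> / \<Delta>) c^(k-1) gap_bound ((k-1) R) to ln (y v / x v), hence
  (k-1) R \<le> \<zeta> (k-1) c^(k-1) gap_bound ((k-1) R) < e * gap_bound ((k-1) R) \<le> (k-1) R
  unless R \<le> 0.
\<close>

text \<open>The maximum of exp (-T) (1 - exp (-\<sigma>)) over T \<ge> 0 subject to \<sigma> \<le> S and \<sigma> \<le> (e^S - 1) T,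
  attained at T = S / (e^S - 1), \<sigma> = S.\<close>
definition gap_bound :: "real \<Rightarrow> real" where
  "gap_bound S = exp (- (S / (exp S - 1))) * (1 - exp (- S))"

lemma gap_bound_pos: "S > 0 \<Longrightarrow> 0 < gap_bound S"
  by (simp add: gap_bound_def)

lemma exp_minus_diff_mono:
  fixes S T t :: real
  assumes "S > 0" "T \<le> t" "t \<le> S / (exp S - 1)"
  shows "exp (- T) - exp (- (exp S * T)) \<le> exp (- t) - exp (- (exp S * t))"
proof (rule DERIV_nonneg_imp_nondecreasing[OF \<open>T \<le> t\<close>])
  fix u assume u: "T \<le> u" "u \<le> t"
  have "exp S - 1 > 0"
    using \<open>S > 0\<close> by simp
  moreover have "u \<le> S / (exp S - 1)"
    using u assms(3) by linarith
  ultimately have "(exp S - 1) * u \<le> S"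
    by (simp add: pos_le_divide_eq mult.commute)
  then have "exp (- u) \<le> exp (S - exp S * u)"
    by (simp add: algebra_simps)
  then have "0 \<le> exp S * exp (- (exp S * u)) - exp (- u)"
    by (simp add: exp_diff exp_minus field_simps)
  moreover have "((\<lambda>u. exp (- u) - exp (- (exp S * u))) has_real_derivative
      exp S * exp (- (exp S * u)) - exp (- u)) (at u)"
    by (auto intro!: derivative_eq_intros)
  ultimately show "\<exists>y. ((\<lambda>u. exp (- u) - exp (- (exp S * u))) has_real_derivative y) (at u) \<and> y \<ge> 0"
    by blast
qed

lemma gap_le_gap_bound:
  fixes S T \<sigma> :: real
  assumes "S > 0" "T \<ge> 0" "\<sigma> \<le> S" "\<sigma> \<le> (exp S - 1) * T"
  shows "exp (- T) * (1 - exp (- \<sigma>)) \<le> gap_bound S"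
proof -
  define s where "s = S / (exp S - 1)"
  have "exp S - 1 > 0"
    using \<open>S > 0\<close> by simp
  then have exp_S_s: "exp S * s = s + S"
    unfolding s_def by (simp add: field_simps)
  show ?thesis
  proof (cases "s \<le> T")
    case True
    have "exp (- T) * (1 - exp (- \<sigma>)) \<le> exp (- T) * (1 - exp (- S))"
      using \<open>\<sigma> \<le> S\<close> by simp
    also have "\<dots> \<le> exp (- s) * (1 - exp (- S))"
      using True \<open>S > 0\<close> by (intro mult_right_mono) auto
    finally show ?thesis
      unfolding gap_bound_def s_def .
  next
    case False
    have "exp (- T) * (1 - exp (- \<sigma>)) \<le> exp (- T) * (1 - exp (- ((exp S - 1) * T)))"
      using assms(4) by simp
    also have "\<dots> = exp (- T) - exp (- (exp S * T))"
      by (simp add: algebra_simps flip: exp_add)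
    also have "\<dots> \<le> exp (- s) - exp (- (exp S * s))"
      using False \<open>S > 0\<close> unfolding s_def by (intro exp_minus_diff_mono) auto
    also have "\<dots> = exp (- s) * (1 - exp (- S))"
      unfolding exp_S_s by (simp add: algebra_simps flip: exp_add)
    finally show ?thesis
      unfolding gap_bound_def s_def .
  qed
qed

lemma mult_exp_half_le_exp_minus_one:
  fixes S :: real
  assumes "S \<ge> 0"
  shows "S * exp (S / 2) \<le> exp S - 1"
proof -
  have "S \<le> exp (S / 2) - inverse (exp (S / 2))"
    using real_le_x_sinh[of "S / 2"] assms by simp
  then have "S * exp (S / 2) \<le> (exp (S / 2) - inverse (exp (S / 2))) * exp (S / 2)"
    by (simp add: mult_right_mono)
  also have "\<dots> = exp S - 1"
    by (simp add: algebra_simps flip: exp_add)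
  finally show ?thesis .
qed

lemma exp_one_mult_gap_bound_le:
  fixes S :: real
  assumes "S > 0"
  shows "exp 1 * gap_bound S \<le> S"
proof -
  txt \<open>Taking logarithms, the claim is 0 \<le> f S; f vanishes at 0+ and is nondecreasing.\<close>
  define f where "f S = ln S - ln (exp S - 1) + S / (exp S - 1) + S - 1" for S :: real
  have f_mono: "f \<epsilon> \<le> f S" if "0 < \<epsilon>" "\<epsilon> \<le> S" for \<epsilon>
  proof (rule DERIV_nonneg_imp_nondecreasing[OF \<open>\<epsilon> \<le> S\<close>])
    fix x assume "\<epsilon> \<le> x" "x \<le> S"
    then have "x > 0" "exp x - 1 > 0"
      using that by auto
    have "(f has_real_derivative
        1 / x - exp x / (exp x - 1) + ((exp x - 1) - x * exp x) / (exp x - 1)\<^sup>2 + 1) (at x)"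
      unfolding f_def using \<open>x > 0\<close> \<open>exp x - 1 > 0\<close>
      by (auto intro!: derivative_eq_intros simp: field_simps power2_eq_square)
    moreover have "exp x / (exp x - 1) - ((exp x - 1) - x * exp x) / (exp x - 1)\<^sup>2
        = 1 + x * exp x / (exp x - 1)\<^sup>2"
    proof -
      obtain v where "exp x = v + 1" "v > 0"
        using \<open>exp x - 1 > 0\<close> by (metis add.commute diff_add_cancel)
      then show ?thesis
        by (simp add: field_simps power2_eq_square)
    qed
    moreover have "x * exp x / (exp x - 1)\<^sup>2 \<le> 1 / x"
    proof -
      have "(x * exp (x / 2))\<^sup>2 \<le> (exp x - 1)\<^sup>2"
        using mult_exp_half_le_exp_minus_one[of x] \<open>x > 0\<close> by (intro power_mono) auto
      then have "x * (x * exp x) \<le> (exp x - 1)\<^sup>2"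
        by (simp add: power2_eq_square algebra_simps flip: exp_add)
      then show ?thesis
        using \<open>x > 0\<close> \<open>exp x - 1 > 0\<close> by (simp add: field_simps)
    qed
    ultimately show "\<exists>y. (f has_real_derivative y) (at x) \<and> y \<ge> 0"
      by auto
  qed
  have "(f \<longlongrightarrow> 0) (at_right 0)"
    unfolding f_def by real_asymp
  moreover have "\<forall>\<^sub>F \<epsilon> in at_right 0. f \<epsilon> \<le> f S"
    unfolding eventually_at_right[OF assms] using f_mono assms by (intro exI[of _ S]) auto
  ultimately have "0 \<le> f S"
    by (rule tendsto_upperbound) simp
  have "1 - exp (- S) = exp (ln (exp S - 1) - S)"
    using assms by (simp add: exp_diff exp_minus field_simps)
  then have "exp 1 * gap_bound S = exp (1 - S / (exp S - 1) + ln (exp S - 1) - S)"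
    unfolding gap_bound_def by (simp flip: exp_add)
  also have "\<dots> \<le> exp (ln S)"
    using \<open>0 \<le> f S\<close> unfolding f_def by simp
  finally show ?thesis
    using assms by simp
qed

lemma antitone_ex1_fixpoint:
  fixes F :: "('a \<Rightarrow> real) \<Rightarrow> 'a \<Rightarrow> real" and V :: "'a set" and a b :: real
  defines "B \<equiv> \<Pi>\<^sub>E v\<in>V. {a..b}"
  assumes "a \<le> b"
    and maps_to: "\<And>x. x \<in> B \<Longrightarrow> F x \<in> B"
    and antitone: "\<And>x y v. x \<in> B \<Longrightarrow> y \<in> B \<Longrightarrow> (\<forall>u\<in>V. x u \<le> y u) \<Longrightarrow> v \<in> V \<Longrightarrow> F y v \<le> F x v"
    and no_2cycle: "\<And>x y. x \<in> B \<Longrightarrow> y \<in> B \<Longrightarrow> F x = y \<Longrightarrow> F y = x \<Longrightarrow> x = y"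
  shows "\<exists>!x. x \<in> B \<and> F x = x"
proof -
  have mono: "F (F x) v \<le> F (F y) v"
    if "x \<in> B" "y \<in> B" "\<forall>u\<in>V. x u \<le> y u" "v \<in> V" for x y v
  proof -
    have "\<forall>u\<in>V. F y u \<le> F x u"
      using antitone that by blast
    then show ?thesis
      using antitone[of "F y" "F x" v] maps_to that by blast
  qed
  txt \<open>As in Knaster-Tarski, p is the least fixed point of F \<circ> F.\<close>
  define P where "P = {x \<in> B. \<forall>v\<in>V. F (F x) v \<le> x v}"
  define p where "p = restrict (\<lambda>v. INF x\<in>P. x v) V"
  define upper where "upper = restrict (\<lambda>_. b) V"
  have "upper \<in> B"
    using \<open>a \<le> b\<close> by (simp add: upper_def B_def)
  then have "F (F upper) \<in> B"
    using maps_to by blast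
  then have "upper \<in> P"
    using \<open>upper \<in> B\<close> by (simp add: P_def B_def upper_def PiE_iff)
  have p_le: "p v \<le> x v" if "x \<in> P" "v \<in> V" for x v
  proof -
    have "bdd_below ((\<lambda>x. x v) ` P)"
      using \<open>v \<in> V\<close> by (intro bdd_belowI[where m = a]) (auto simp: P_def B_def PiE_iff)
    then show ?thesis
      using that by (simp add: p_def) (rule cINF_lower)
  qed
  have le_p: "z \<le> p v" if "\<And>x. x \<in> P \<Longrightarrow> z \<le> x v" "v \<in> V" for z v
    using that \<open>upper \<in> P\<close> unfolding p_def by (auto intro: cINF_greatest)
  have "p \<in> B"
  proof -
    have "p v \<in> {a..b}" if "v \<in> V" for v
      using p_le[OF \<open>upper \<in> P\<close> that] le_p[of a v] that
      by (auto simp: upper_def P_def B_def PiE_iff)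
    then show ?thesis
      by (simp add: B_def p_def PiE_iff)
  qed
  have FFp_in: "F (F p) \<in> B"
    using \<open>p \<in> B\<close> maps_to by blast
  have FFp_le: "F (F p) v \<le> p v" if "v \<in> V" for v
  proof (rule le_p[OF _ that])
    fix x assume "x \<in> P"
    then have "x \<in> B" "\<forall>u\<in>V. p u \<le> x u"
      using p_le by (auto simp: P_def)
    then have "F (F p) v \<le> F (F x) v"
      using mono[OF \<open>p \<in> B\<close>] that by blast
    also have "\<dots> \<le> x v"
      using \<open>x \<in> P\<close> that by (simp add: P_def)
    finally show "F (F p) v \<le> x v" .
  qed
  then have "F (F (F (F p))) v \<le> F (F p) v" if "v \<in> V" for v
    using mono[OF FFp_in \<open>p \<in> B\<close>] that by blast
  then have "F (F p) \<in> P"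
    using FFp_in by (simp add: P_def)
  then have "F (F p) = p"
    using p_le FFp_le FFp_in \<open>p \<in> B\<close> unfolding B_def
    by (intro PiE_ext[of _ V "\<lambda>_. {a..b}"]) (auto intro: antisym)
  then have "F p = p"
    using no_2cycle[OF \<open>p \<in> B\<close> maps_to[OF \<open>p \<in> B\<close>] refl] by metis
  show ?thesis
  proof (rule ex1I[of _ p])
    show "p \<in> B \<and> F p = p"
      using \<open>p \<in> B\<close> \<open>F p = p\<close> by blast
  next
    fix z assume z: "z \<in> B \<and> F z = z"
    then have "z \<in> P"
      by (simp add: P_def)
    then have p_le_z: "\<forall>u\<in>V. p u \<le> z u"
      using p_le by blast
    have "z v = p v" if "v \<in> V" for v
    proof (rule antisym)
      show "z v \<le> p v"
        using antitone[OF \<open>p \<in> B\<close> _ p_le_z that] z \<open>F p = p\<close> by simp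
    qed (use p_le_z that in blast)
    then show "z = p"
      using z \<open>p \<in> B\<close> unfolding B_def by (intro PiE_ext[of _ V "\<lambda>_. {a..b}"]) auto
  qed
qed

definition link_sum :: "'a set set \<Rightarrow> ('a \<Rightarrow> real) \<Rightarrow> 'a \<Rightarrow> real" where
  "link_sum E x v = (\<Sum>e\<in>{e\<in>E. v \<in> e}. \<Prod>u\<in>e - {v}. x u)"

lemma Fmap_apply:
  "v \<in> V \<Longrightarrow> Fmap V E c \<zeta> x v = c * exp (- (\<zeta> / real (max_degree V E)) * link_sum E x v)"
  by (simp add: Fmap_def link_sum_def)

lemma degree_le_max_degree:
  assumes "finite V" "v \<in> V"
  shows "card {e\<in>E. v \<in> e} \<le> max_degree V E"
proof -
  have "finite {hdeg E S | S. S \<subseteq> V \<and> card S = 1}"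
  proof (rule finite_subset)
    show "{hdeg E S | S. S \<subseteq> V \<and> card S = 1} \<subseteq> hdeg E ` Pow V"
      by blast
  qed (use \<open>finite V\<close> in simp)
  moreover have "hdeg E {v} \<in> {hdeg E S | S. S \<subseteq> V \<and> card S = 1}"
    using \<open>v \<in> V\<close> by auto
  ultimately have "hdeg E {v} \<le> max_degree V E"
    unfolding max_degree_def Delta_l_def by (intro Max_ge) auto
  then show ?thesis
    by (simp add: hdeg_def)
qed

context
  fixes V :: "'a set" and E :: "'a set set" and k :: nat and c \<zeta> :: real
  assumes uniform: "uniform_hypergraph k V E"
    and k_ge_2: "k \<ge> 2" and c_pos: "c > 0" and \<zeta>_nonneg: "\<zeta> \<ge> 0"
begin

lemma edge_subset: "e \<in> E \<Longrightarrow> e \<subseteq> V"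
  using uniform by (simp add: uniform_hypergraph_def)

lemma finite_edge: "e \<in> E \<Longrightarrow> finite e"
  using uniform edge_subset by (meson finite_subset uniform_hypergraph_def)

lemma card_edge_minus: "e \<in> E \<Longrightarrow> u \<in> e \<Longrightarrow> card (e - {u}) = k - 1"
  using uniform finite_edge by (simp add: uniform_hypergraph_def card_Diff_singleton)

lemma link_sum_nonneg: "(\<And>u. u \<in> V \<Longrightarrow> 0 \<le> x u) \<Longrightarrow> 0 \<le> link_sum E x v"
  unfolding link_sum_def using edge_subset by (intro sum_nonneg prod_nonneg) blast

lemma link_sum_mono:
  "(\<And>u. u \<in> V \<Longrightarrow> 0 \<le> x u) \<Longrightarrow> (\<And>u. u \<in> V \<Longrightarrow> x u \<le> y u) \<Longrightarrow> link_sum E x v \<le> link_sum E y v"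
  unfolding link_sum_def using edge_subset by (intro sum_mono prod_mono) blast

lemma weight_mult_degree_le:
  assumes "v \<in> V"
  shows "\<zeta> / real (max_degree V E) * real (card {e\<in>E. v \<in> e}) \<le> \<zeta>"
proof (cases "max_degree V E = 0")
  case False
  have "card {e\<in>E. v \<in> e} \<le> max_degree V E"
    using uniform assms by (intro degree_le_max_degree) (simp_all add: uniform_hypergraph_def)
  then show ?thesis
    using False \<zeta>_nonneg by (simp add: field_simps mult_left_mono)
qed (simp add: \<zeta>_nonneg)

lemma Fmap_pos: "v \<in> V \<Longrightarrow> 0 < Fmap V E c \<zeta> x v"
  using c_pos by (simp add: Fmap_apply)

lemma Fmap_in_box:
  assumes "\<And>u. u \<in> V \<Longrightarrow> 0 \<le> x u"
  shows "Fmap V E c \<zeta> x \<in> (\<Pi>\<^sub>E v\<in>V. {0..c})"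
proof -
  have "Fmap V E c \<zeta> x v \<le> c" if "v \<in> V" for v
    using that c_pos \<zeta>_nonneg link_sum_nonneg[OF assms] by (simp add: Fmap_apply)
  moreover have "Fmap V E c \<zeta> x \<in> extensional V"
    by (simp add: Fmap_def)
  ultimately show ?thesis
    using Fmap_pos by (auto simp: PiE_iff less_imp_le)
qed

lemma Fmap_antitone:
  assumes "\<And>u. u \<in> V \<Longrightarrow> 0 \<le> x u" "\<And>u. u \<in> V \<Longrightarrow> x u \<le> y u" "v \<in> V"
  shows "Fmap V E c \<zeta> y v \<le> Fmap V E c \<zeta> x v"
proof -
  have "link_sum E x v \<le> link_sum E y v"
    by (rule link_sum_mono[OF assms(1,2)])
  then show ?thesis
    using assms(3) c_pos \<zeta>_nonneg by (simp add: Fmap_apply mult_left_mono divide_right_mono)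
qed

context
  fixes x y :: "'a \<Rightarrow> real"
  assumes x_to_y: "Fmap V E c \<zeta> x = y" and y_to_x: "Fmap V E c \<zeta> y = x"
begin

lemma two_cycle_pos:
  assumes "u \<in> V"
  shows "0 < x u" "0 < y u"
  using Fmap_pos[OF assms, of x] Fmap_pos[OF assms, of y] x_to_y y_to_x by simp_all

lemma log_ratio_eq:
  assumes "u \<in> V"
  shows "ln (y u) - ln (x u) = \<zeta> / real (max_degree V E) * (link_sum E y u - link_sum E x u)"
proof -
  have "ln (y u) = ln c - \<zeta> / real (max_degree V E) * link_sum E x u"
    using Fmap_apply[OF assms, of E c \<zeta> x] x_to_y c_pos by (simp add: ln_mult)
  moreover have "ln (x u) = ln c - \<zeta> / real (max_degree V E) * link_sum E y u"
    using Fmap_apply[OF assms, of E c \<zeta> y] y_to_x c_pos by (simp add: ln_mult)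
  ultimately show ?thesis
    by (simp add: algebra_simps)
qed

lemma prod_link_ratio:
  assumes "e \<in> E" "u \<in> e"
  shows "(\<Prod>t\<in>e - {u}. y t) = (\<Prod>t\<in>e - {u}. x t) * exp (\<Sum>t\<in>e - {u}. ln (y t) - ln (x t))"
proof -
  have "(\<Prod>t\<in>e - {u}. y t) = (\<Prod>t\<in>e - {u}. x t * exp (ln (y t) - ln (x t)))"
  proof (rule prod.cong)
    fix t assume "t \<in> e - {u}"
    then have "t \<in> V"
      using edge_subset[OF assms(1)] by blast
    then show "y t = x t * exp (ln (y t) - ln (x t))"
      using two_cycle_pos[OF \<open>t \<in> V\<close>] by (simp add: exp_diff)
  qed simp
  also have "\<dots> = (\<Prod>t\<in>e - {u}. x t) * exp (\<Sum>t\<in>e - {u}. ln (y t) - ln (x t))"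
    using finite_edge[OF assms(1)] by (simp add: prod.distrib exp_sum)
  finally show ?thesis .
qed

context
  fixes R :: real
  assumes log_ratio_le: "\<And>u. u \<in> V \<Longrightarrow> ln (y u) - ln (x u) \<le> R"
begin

lemma sum_log_ratio_le:
  assumes "e \<in> E" "u \<in> e"
  shows "(\<Sum>t\<in>e - {u}. ln (y t) - ln (x t)) \<le> (real k - 1) * R"
proof -
  have "(\<Sum>t\<in>e - {u}. ln (y t) - ln (x t)) \<le> (\<Sum>t\<in>e - {u}. R)"
    using edge_subset[OF assms(1)] log_ratio_le by (intro sum_mono) blast
  also have "\<dots> = (real k - 1) * R"
    using card_edge_minus[OF assms] k_ge_2 by (simp add: of_nat_diff)
  finally show ?thesis .
qed

lemma log_ratio_le_link_sum:
  assumes "u \<in> V"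
  shows "ln (y u) - ln (x u) \<le> (exp ((real k - 1) * R) - 1) * (\<zeta> / real (max_degree V E) * link_sum E x u)"
proof -
  let ?S = "(real k - 1) * R"
  have "link_sum E y u - link_sum E x u \<le> (exp ?S - 1) * link_sum E x u"
    unfolding link_sum_def sum_distrib_left sum_subtractf[symmetric]
  proof (intro sum_mono)
    fix e assume "e \<in> {e \<in> E. u \<in> e}"
    then have "e \<in> E" "u \<in> e"
      by auto
    have "0 \<le> (\<Prod>t\<in>e - {u}. x t)"
      using edge_subset[OF \<open>e \<in> E\<close>] two_cycle_pos by (intro prod_nonneg) (auto intro: less_imp_le)
    moreover have "exp (\<Sum>t\<in>e - {u}. ln (y t) - ln (x t)) \<le> exp ?S"
      using sum_log_ratio_le[OF \<open>e \<in> E\<close> \<open>u \<in> e\<close>] by simp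
    ultimately show "(\<Prod>t\<in>e - {u}. y t) - (\<Prod>t\<in>e - {u}. x t) \<le> (exp ?S - 1) * (\<Prod>t\<in>e - {u}. x t)"
      unfolding prod_link_ratio[OF \<open>e \<in> E\<close> \<open>u \<in> e\<close>] by (simp add: algebra_simps mult_left_mono)
  qed
  then have "\<zeta> / real (max_degree V E) * (link_sum E y u - link_sum E x u)
      \<le> \<zeta> / real (max_degree V E) * ((exp ?S - 1) * link_sum E x u)"
    using \<zeta>_nonneg by (intro mult_left_mono) auto
  then show ?thesis
    unfolding log_ratio_eq[OF assms] by (simp only: mult.left_commute)
qed

lemma edge_prod_diff_le:
  assumes "R > 0" "e \<in> E" "v \<in> e"
  shows "(\<Prod>t\<in>e - {v}. y t) - (\<Prod>t\<in>e - {v}. x t) \<le> c ^ (k - 1) * gap_bound ((real k - 1) * R)"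
proof -
  let ?w = "\<zeta> / real (max_degree V E)"
  let ?S = "(real k - 1) * R"
  define T where "T = (\<Sum>t\<in>e - {v}. ?w * link_sum E x t)"
  define \<sigma> where "\<sigma> = (\<Sum>t\<in>e - {v}. ln (y t) - ln (x t))"
  have "e - {v} \<subseteq> V" "finite (e - {v})"
    using edge_subset[OF assms(2)] finite_edge[OF assms(2)] by auto
  have "(\<Prod>t\<in>e - {v}. y t) = (\<Prod>t\<in>e - {v}. c * exp (- (?w * link_sum E x t)))"
    using \<open>e - {v} \<subseteq> V\<close> x_to_y by (intro prod.cong) (auto simp: Fmap_apply)
  also have "\<dots> = c ^ (k - 1) * exp (- T)"
    using \<open>finite (e - {v})\<close> card_edge_minus[OF assms(2,3)]
    by (simp add: T_def prod.distrib exp_sum flip: sum_negf)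
  finally have y_prod: "(\<Prod>t\<in>e - {v}. y t) = c ^ (k - 1) * exp (- T)" .
  have x_prod: "(\<Prod>t\<in>e - {v}. x t) = (\<Prod>t\<in>e - {v}. y t) * exp (- \<sigma>)"
    unfolding prod_link_ratio[OF assms(2,3)] \<sigma>_def by (simp add: exp_minus_inverse)
  have "0 \<le> T"
    unfolding T_def using \<zeta>_nonneg two_cycle_pos
    by (intro sum_nonneg mult_nonneg_nonneg link_sum_nonneg) (auto intro: less_imp_le)
  moreover have "\<sigma> \<le> ?S"
    unfolding \<sigma>_def using sum_log_ratio_le[OF assms(2,3)] .
  moreover have "\<sigma> \<le> (exp ?S - 1) * T"
    unfolding \<sigma>_def T_def sum_distrib_left
    using \<open>e - {v} \<subseteq> V\<close> log_ratio_le_link_sum by (intro sum_mono) blast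
  moreover have "?S > 0"
    using k_ge_2 \<open>R > 0\<close> by simp
  ultimately have "exp (- T) * (1 - exp (- \<sigma>)) \<le> gap_bound ?S"
    by (intro gap_le_gap_bound)
  moreover have "(\<Prod>t\<in>e - {v}. y t) - (\<Prod>t\<in>e - {v}. x t) = c ^ (k - 1) * (exp (- T) * (1 - exp (- \<sigma>)))"
    unfolding x_prod y_prod by (simp add: algebra_simps)
  ultimately show ?thesis
    using c_pos by (simp add: mult_left_mono)
qed

lemma log_ratio_le_gap_bound:
  assumes "R > 0" "v \<in> V"
  shows "(real k - 1) * (ln (y v) - ln (x v)) \<le> \<zeta> * (real k - 1) * c ^ (k - 1) * gap_bound ((real k - 1) * R)"
proof -
  let ?w = "\<zeta> / real (max_degree V E)"
  let ?B = "c ^ (k - 1) * gap_bound ((real k - 1) * R)"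
  have "0 \<le> ?B"
    using c_pos gap_bound_pos[of "(real k - 1) * R"] k_ge_2 \<open>R > 0\<close> by simp
  have "ln (y v) - ln (x v) = ?w * (\<Sum>e\<in>{e\<in>E. v \<in> e}. (\<Prod>t\<in>e - {v}. y t) - (\<Prod>t\<in>e - {v}. x t))"
    unfolding log_ratio_eq[OF assms(2)] link_sum_def by (simp add: sum_subtractf)
  also have "\<dots> \<le> ?w * (\<Sum>e\<in>{e\<in>E. v \<in> e}. ?B)"
    using \<zeta>_nonneg edge_prod_diff_le[OF assms(1)] by (intro mult_left_mono sum_mono) auto
  also have "\<dots> = (?w * real (card {e\<in>E. v \<in> e})) * ?B"
    by simp
  also have "\<dots> \<le> \<zeta> * ?B"
    using weight_mult_degree_le[OF assms(2)] \<open>0 \<le> ?B\<close> by (rule mult_right_mono)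
  finally show ?thesis
    using k_ge_2 by (simp add: mult_left_mono mult.assoc)
qed

end

lemma two_cycle_le:
  assumes "\<zeta> * (real k - 1) * c ^ (k - 1) < exp 1" "v \<in> V"
  shows "y v \<le> x v"
proof (rule ccontr)
  define \<rho> where "\<rho> u = ln (y u) - ln (x u)" for u
  assume "\<not> y v \<le> x v"
  then have "0 < \<rho> v"
    using two_cycle_pos[OF assms(2)] by (simp add: \<rho>_def)
  have "finite V"
    using uniform by (simp add: uniform_hypergraph_def)
  define R where "R = Max (\<rho> ` V)"
  have R_ge: "\<rho> u \<le> R" if "u \<in> V" for u
    unfolding R_def using \<open>finite V\<close> that by (intro Max_ge) simp_all
  have "R \<in> \<rho> ` V"
    unfolding R_def using \<open>finite V\<close> assms(2) by (intro Max_in) auto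
  then obtain v0 where "v0 \<in> V" "\<rho> v0 = R"
    by blast
  have "R > 0"
    using R_ge[OF assms(2)] \<open>0 < \<rho> v\<close> by linarith
  define S where "S = (real k - 1) * R"
  have "S > 0"
    unfolding S_def using k_ge_2 \<open>R > 0\<close> by simp
  have "S \<le> \<zeta> * (real k - 1) * c ^ (k - 1) * gap_bound S"
    using log_ratio_le_gap_bound[OF R_ge[unfolded \<rho>_def] \<open>R > 0\<close> \<open>v0 \<in> V\<close>] \<open>\<rho> v0 = R\<close>
    unfolding S_def \<rho>_def by simp
  also have "\<dots> < exp 1 * gap_bound S"
    using assms(1) gap_bound_pos[OF \<open>S > 0\<close>] by (rule mult_strict_right_mono)
  also have "\<dots> \<le> S"
    using exp_one_mult_gap_bound_le[OF \<open>S > 0\<close>] .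
  finally show False
    by simp
qed

end

lemma Fmap_two_cycle_eq:
  assumes "\<zeta> * (real k - 1) * c ^ (k - 1) < exp 1" "Fmap V E c \<zeta> x = y" "Fmap V E c \<zeta> y = x"
  shows "x = y"
proof (rule extensionalityI[of _ V])
  have "Fmap V E c \<zeta> z \<in> extensional V" for z
    by (simp add: Fmap_def)
  then show "x \<in> extensional V" "y \<in> extensional V"
    using assms(2,3) by metis+
  fix v assume "v \<in> V"
  then show "x v = y v"
    using two_cycle_le[OF assms(2,3,1)] two_cycle_le[OF assms(3,2,1)] by (simp add: antisym)
qed

lemma Fmap_ex1_fixpoint:
  assumes "\<zeta> * (real k - 1) * c ^ (k - 1) < exp 1"
  shows "\<exists>!x. x \<in> (\<Pi>\<^sub>E v\<in>V. {0..c}) \<and> Fmap V E c \<zeta> x = x"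
proof (rule antitone_ex1_fixpoint)
  show "0 \<le> c"
    using c_pos by simp
  show "Fmap V E c \<zeta> x \<in> (\<Pi>\<^sub>E v\<in>V. {0..c})" if "x \<in> (\<Pi>\<^sub>E v\<in>V. {0..c})" for x
    using that by (intro Fmap_in_box) auto
  show "Fmap V E c \<zeta> y v \<le> Fmap V E c \<zeta> x v"
    if "x \<in> (\<Pi>\<^sub>E v\<in>V. {0..c})" "\<forall>u\<in>V. x u \<le> y u" "v \<in> V" for x y v
    using that by (intro Fmap_antitone) auto
  show "x = y" if "Fmap V E c \<zeta> x = y" "Fmap V E c \<zeta> y = x" for x y
    using Fmap_two_cycle_eq[OF assms that] .
qed

end

theorem mainTheorem8:
  fixes k :: nat and c :: real and \<zeta> :: "nat \<Rightarrow> real"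
    and V :: "nat \<Rightarrow> 'a set" and E :: "nat \<Rightarrow> 'a set set"
  assumes "k \<ge> 2" and "c > 0"
    and "\<And>n. \<zeta> n \<in> {0<..1}"
    and "limsup (\<lambda>n. ereal (\<zeta> n * (real k - 1) * c ^ (k - 1))) < ereal (exp 1)"
    and "asymp_tree_like k V E"
  shows "\<forall>\<^sub>F n in sequentially. \<exists>!x. x \<in> (\<Pi>\<^sub>E v\<in>V n. {0..c}) \<and> Fmap (V n) (E n) c (\<zeta> n) x = x"
proof -
  have "\<forall>\<^sub>F n in sequentially. \<zeta> n * (real k - 1) * c ^ (k - 1) < exp 1"
    using Limsup_lessD[OF assms(4)] by (auto elim!: eventually_mono)
  then show ?thesis
  proof (rule eventually_mono)
    fix n
    have "uniform_hypergraph k (V n) (E n)"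
      using assms(5) unfolding asymp_tree_like_def by blast
    moreover have "\<zeta> n \<ge> 0"
      using assms(3)[of n] by simp
    ultimately show "\<zeta> n * (real k - 1) * c ^ (k - 1) < exp 1 \<Longrightarrow>
        \<exists>!x. x \<in> (\<Pi>\<^sub>E v\<in>V n. {0..c}) \<and> Fmap (V n) (E n) c (\<zeta> n) x = x"
      by (rule Fmap_ex1_fixpoint[OF _ assms(1,2)])
  qed
qed

end
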